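(* Let $G=(V,E)$ and $G'=(V,E')$ be graphs and $\lambda>0$. Suppose every pair in $E\setminus E'$ is $(\ell,d)$ connected in $G'$ and every pair in $E'\setminus E$ is $(\ell,d)$ connected in $G$. Then $$D(f_G\|f_{G'})\;\le\;\frac{2\lambda\,|E\,\Delta\,E'|}{1+\dfrac{(1+(\tanh\lambda)^{\ell})^{d}}{(1-(\tanh\lambda)^{\ell})^{d}}}.$$
   Context: For a graph $G=(V,E)$ and $\lambda>0$, $f_G(\mathbf{x})=\frac{1}{Z}\exp\big(\sum_{(i,j)\in E}\lambda x_ix_j\big)$ on $\{-1,+1\}^V$. $D(f\|g)=\sum_x f(x)\log(f(x)/g(x))$ is the KL-divergence; $E\Delta E'$ is the symmetric difference. Two nodes are $(\ell,d)$ connected if there are $d$ node-disjoint paths between them, each of length at most $\ell$. *)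

theory Defs
  imports "HOL-Analysis.Analysis"
begin

definition graph :: "'a set \<Rightarrow> 'a set set \<Rightarrow> bool" where
  "graph V E \<longleftrightarrow> finite V \<and> (\<forall>e\<in>E. e \<subseteq> V \<and> card e = 2)"

definition configs :: "'a set \<Rightarrow> ('a \<Rightarrow> real) set" where
  "configs V = PiE V (\<lambda>_. {-1, 1})"

text \<open>Energy term  sum over edges (i,j) of lambda x_i x_j, each undirected edge counted once.\<close>
definition ising_energy :: "'a set set \<Rightarrow> real \<Rightarrow> ('a \<Rightarrow> real) \<Rightarrow> real" where
  "ising_energy E lam x = (\<Sum>e\<in>E. lam * (\<Prod>v\<in>e. x v))"

definition partition_fn :: "'a set \<Rightarrow> 'a set set \<Rightarrow> real \<Rightarrow> real" where
  "partition_fn V E lam = (\<Sum>x\<in>configs V. exp (ising_energy E lam x))"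

definition ising :: "'a set \<Rightarrow> 'a set set \<Rightarrow> real \<Rightarrow> ('a \<Rightarrow> real) \<Rightarrow> real" where
  "ising V E lam x = exp (ising_energy E lam x) / partition_fn V E lam"

definition KL :: "'a set \<Rightarrow> (('a \<Rightarrow> real) \<Rightarrow> real) \<Rightarrow> (('a \<Rightarrow> real) \<Rightarrow> real) \<Rightarrow> real" where
  "KL V f g = (\<Sum>x\<in>configs V. f x * ln (f x / g x))"

definition is_path :: "'a set set \<Rightarrow> 'a \<Rightarrow> 'a \<Rightarrow> 'a list \<Rightarrow> bool" where
  "is_path E u v p \<longleftrightarrow> p \<noteq> [] \<and> hd p = u \<and> last p = v \<and> distinct p \<and>
     (\<forall>i. Suc i < length p \<longrightarrow> {p ! i, p ! Suc i} \<in> E)"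

definition internal :: "'a list \<Rightarrow> 'a set" where
  "internal p = set (butlast (tl p))"

definition ld_connected :: "'a set set \<Rightarrow> nat \<Rightarrow> nat \<Rightarrow> 'a \<Rightarrow> 'a \<Rightarrow> bool" where
  "ld_connected E l d u v \<longleftrightarrow>
     (\<exists>ps :: 'a list list. length ps = d \<and> distinct ps \<and>
        (\<forall>p\<in>set ps. is_path E u v p \<and> length p - 1 \<le> l) \<and>
        (\<forall>i<d. \<forall>j<d. i \<noteq> j \<longrightarrow> internal (ps ! i) \<inter> internal (ps ! j) = {}))"

end

theory Submission
  imports Defs
begin

text \<open>
  Writing \<open>f\<^sub>G\<close> relative to \<open>f\<^sub>G\<^sub>'\<close> and applying Jensen's inequality to the
  log-partition function bounds the divergence by \<open>\<lambda>\<close> times the sum, over the edges \<open>{u, v}\<close>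
  of the symmetric difference, of the gap between the correlations \<open>\<langle>x\<^sub>u x\<^sub>v\<rangle>\<close> in the
  two models. Each gap is at most \<open>1 - \<langle>x\<^sub>u x\<^sub>v\<rangle>\<close> in the graph lacking the edge. By
  Griffiths' second inequality, correlations only grow when edges are added, so this correlation
  is at least the one in the subgraph formed by \<open>d\<close> node-disjoint \<open>u\<close>-\<open>v\<close> paths.
  There, \<open>exp (\<lambda> x\<^sub>i x\<^sub>j) = cosh \<lambda> (1 + t x\<^sub>i x\<^sub>j)\<close> with \<open>t = tanh \<lambda>\<close>, and summing out
  the internal vertices gives \<open>(\<Prod>(1 + t\<^sup>\<ell>\<^sup>i) - \<Prod>(1 - t\<^sup>\<ell>\<^sup>i)) / (\<Prod>(1 + t\<^sup>\<ell>\<^sup>i) + \<Prod>(1 - t\<^sup>\<ell>\<^sup>i))\<close>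
  for path lengths \<open>\<ell>\<^sub>i\<close>, which decreases in each \<open>\<ell>\<^sub>i \<le> \<ell>\<close>.
\<close>

definition spin_prod :: "'a set \<Rightarrow> ('a \<Rightarrow> real) \<Rightarrow> real" where
  "spin_prod A x = (\<Prod>v\<in>A. x v)"

lemma ising_energy_spin_prod: "ising_energy E lam x = (\<Sum>e\<in>E. lam * spin_prod e x)"
  unfolding ising_energy_def spin_prod_def ..

lemma graph_finite_edges: "graph V E \<Longrightarrow> finite E"
  unfolding graph_def by (metis Pow_iff finite_Pow_iff finite_subset subsetI)

lemma finite_configs: "finite V \<Longrightarrow> finite (configs V)"
  unfolding configs_def by (intro finite_PiE) auto

lemma configs_nonempty: "configs V \<noteq> {}"
  unfolding configs_def by (simp add: PiE_eq_empty_iff)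

lemma card_configs: "finite V \<Longrightarrow> card (configs V) = 2 ^ card V"
  unfolding configs_def by (simp add: card_PiE numeral_2_eq_2)

lemma configs_spin: "x \<in> configs V \<Longrightarrow> v \<in> V \<Longrightarrow> x v = 1 \<or> x v = -1"
  unfolding configs_def by (auto dest: PiE_mem)

lemma configs_undefined: "x \<in> configs V \<Longrightarrow> v \<notin> V \<Longrightarrow> x v = undefined"
  unfolding configs_def by (auto simp: PiE_def extensional_def)

lemma spin_prod_cases:
  assumes "x \<in> configs V" "A \<subseteq> V"
  shows "spin_prod A x = 1 \<or> spin_prod A x = -1"
proof (cases "finite A")
  case True
  then show ?thesis
    using assms(2)
  proof (induction A rule: finite_induct)
    case (insert a A)
    then have "x a = 1 \<or> x a = -1" using configs_spin[OF assms(1)] by auto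
    with insert show ?case by (auto simp: spin_prod_def)
  qed (simp add: spin_prod_def)
qed (simp add: spin_prod_def)

lemma exp_mult_sign:
  fixes K s :: real
  assumes "s = 1 \<or> s = -1"
  shows "exp (K * s) = cosh K + s * sinh K"
  using assms by (auto simp: cosh_def sinh_def field_simps)

lemma exp_mult_sign_tanh:
  fixes K s :: real
  assumes "s = 1 \<or> s = -1"
  shows "exp (K * s) = cosh K * (1 + tanh K * s)"
  using exp_mult_sign[OF assms, of K] by (simp add: tanh_def field_simps)

lemma sum_configs_remove:
  assumes "finite V" "b \<in> V"
  shows "(\<Sum>x\<in>configs V. f x) = (\<Sum>x\<in>configs (V - {b}). f (x(b := 1)) + f (x(b := -1)))"
proof -
  have "configs V = (\<lambda>(y, g). g(b := y)) ` ({-1, 1} \<times> configs (V - {b}))"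
    using PiE_insert_eq[of b "V - {b}" "\<lambda>_. {-1, 1::real}"] insert_Diff[OF assms(2)]
    unfolding configs_def by simp
  then have "(\<Sum>x\<in>configs V. f x) = (\<Sum>(y, g)\<in>{-1, 1} \<times> configs (V - {b}). f (g(b := y)))"
    unfolding configs_def
    by (simp add: sum.reindex inj_combinator[of b "V - {b}" "\<lambda>_. {-1, 1::real}", simplified]
        prod.case_distrib)
  also have "\<dots> = (\<Sum>g\<in>configs (V - {b}). \<Sum>y\<in>{-1, 1}. f (g(b := y)))"
    by (subst sum.cartesian_product[symmetric]) (rule sum.swap)
  finally show ?thesis by (simp add: add.commute)
qed

lemma sum_configs_pair:
  fixes h :: "real \<Rightarrow> real"
  assumes "finite R" "u \<in> R" "v \<in> R" "u \<noteq> v"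
  shows "(\<Sum>x\<in>configs R. h (x u * x v)) = 2 ^ (card R - 1) * (h 1 + h (-1))"
proof -
  have "(\<Sum>x\<in>configs R. h (x u * x v)) = (\<Sum>x\<in>configs (R - {u}). h (x v) + h (- x v))"
    unfolding sum_configs_remove[OF assms(1,2)] using assms by simp
  also have "\<dots> = (\<Sum>x\<in>configs (R - {u} - {v}).
      h ((x(v := 1)) v) + h (- (x(v := 1)) v) + (h ((x(v := -1)) v) + h (- (x(v := -1)) v)))"
    by (rule sum_configs_remove) (use assms in auto)
  also have "\<dots> = (\<Sum>x\<in>configs (R - {u} - {v}). 2 * (h 1 + h (-1)))"
    by simp
  also have "\<dots> = 2 ^ card (R - {u} - {v}) * (2 * (h 1 + h (-1)))"
    using assms by (simp add: card_configs)
  also have "card (R - {u} - {v}) = card R - 2"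
    using assms by (simp add: card_Diff_singleton_if)
  also have "card R - 1 = Suc (card R - 2)"
    using card_mono[of R "{u, v}"] assms by simp
  then have "(2::real) ^ (card R - 2) * (2 * (h 1 + h (-1))) = 2 ^ (card R - 1) * (h 1 + h (-1))"
    by simp
  finally show ?thesis .
qed

section \<open>Griffiths' inequalities\<close>

definition gibbs_sum :: "'a set \<Rightarrow> 'a set set \<Rightarrow> real \<Rightarrow> (('a \<Rightarrow> real) \<Rightarrow> real) \<Rightarrow> real" where
  "gibbs_sum V E lam g = (\<Sum>x\<in>configs V. g x * exp (ising_energy E lam x))"

lemma sum_configs_monomial_nonneg:
  assumes "finite V"
  shows "(\<Sum>x\<in>configs V. \<Prod>v\<in>V. x v ^ k v) \<ge> 0"
proof -
  have "(\<Sum>x\<in>configs V. \<Prod>v\<in>V. x v ^ k v) = (\<Prod>v\<in>V. \<Sum>y\<in>{-1, 1::real}. y ^ k v)"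
    unfolding configs_def by (subst prod_sum_PiE) (use assms in auto)
  also have "\<dots> \<ge> 0"
    by (intro prod_nonneg) (simp add: minus_one_power_iff)
  finally show ?thesis .
qed

lemma spin_prod_as_monomial:
  assumes "A \<subseteq> V" "finite V"
  shows "spin_prod A x = (\<Prod>v\<in>V. x v ^ (if v \<in> A then 1 else 0))"
proof -
  have "(\<Prod>v\<in>V. x v ^ (if v \<in> A then 1 else 0)) = (\<Prod>v\<in>V. if v \<in> A then x v else 1)"
    by (rule prod.cong) auto
  also have "\<dots> = prod x A"
    using prod.inter_restrict[OF assms(2), of x A] assms(1) by (simp add: Int_absorb1)
  finally show ?thesis unfolding spin_prod_def by simp
qed

lemma griffiths_first:
  assumes "finite V" "finite E" "\<forall>e\<in>E. e \<subseteq> V" "\<forall>e\<in>E. K e \<ge> 0"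
  shows "(\<Sum>x\<in>configs V. (\<Prod>v\<in>V. x v ^ k v) * exp (\<Sum>e\<in>E. K e * spin_prod e x)) \<ge> 0"
  using assms(2-4)
proof (induction E arbitrary: k rule: finite_induct)
  case empty
  then show ?case using sum_configs_monomial_nonneg[OF assms(1)] by simp
next
  case (insert e F)
  define w where "w x = exp (\<Sum>e\<in>F. K e * spin_prod e x)" for x
  let ?k' = "\<lambda>v. k v + (if v \<in> e then 1 else 0)"
  have eV: "e \<subseteq> V" using insert by auto
  \<comment> \<open>\<open>exp (K s) = cosh K + s sinh K\<close> raises the exponent of every spin in \<open>e\<close> by one.\<close>
  have split: "(\<Prod>v\<in>V. x v ^ k v) * exp (\<Sum>e\<in>insert e F. K e * spin_prod e x)
      = cosh (K e) * ((\<Prod>v\<in>V. x v ^ k v) * w x) + sinh (K e) * ((\<Prod>v\<in>V. x v ^ ?k' v) * w x)"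
    if x: "x \<in> configs V" for x
  proof -
    have "exp (\<Sum>e\<in>insert e F. K e * spin_prod e x) = (cosh (K e) + spin_prod e x * sinh (K e)) * w x"
      using insert exp_mult_sign[OF spin_prod_cases[OF x eV]] by (simp add: exp_add w_def)
    moreover have "spin_prod e x * (\<Prod>v\<in>V. x v ^ k v) = (\<Prod>v\<in>V. x v ^ ?k' v)"
      unfolding spin_prod_as_monomial[OF eV assms(1)]
      by (simp add: power_add prod.distrib[symmetric] mult.commute)
    ultimately show ?thesis by (simp add: algebra_simps)
  qed
  have "0 \<le> cosh (K e) * (\<Sum>x\<in>configs V. (\<Prod>v\<in>V. x v ^ k v) * w x)
      + sinh (K e) * (\<Sum>x\<in>configs V. (\<Prod>v\<in>V. x v ^ ?k' v) * w x)"
    using insert unfolding w_def by (intro add_nonneg_nonneg mult_nonneg_nonneg) auto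
  also have "\<dots> = (\<Sum>x\<in>configs V. (\<Prod>v\<in>V. x v ^ k v) * exp (\<Sum>e\<in>insert e F. K e * spin_prod e x))"
    by (simp add: split sum.distrib sum_distrib_left cong: sum.cong)
  finally show ?case .
qed

definition spin_flip :: "'a set \<Rightarrow> ('a \<Rightarrow> real) \<Rightarrow> ('a \<Rightarrow> real) \<Rightarrow> ('a \<Rightarrow> real)" where
  "spin_flip V x z = restrict (\<lambda>v. x v * z v) V"

lemma spin_flip_in_configs: "x \<in> configs V \<Longrightarrow> z \<in> configs V \<Longrightarrow> spin_flip V x z \<in> configs V"
  using configs_spin[of x V] configs_spin[of z V]
  unfolding spin_flip_def configs_def by (fastforce simp: PiE_iff)

lemma spin_flip_spin_flip: "x \<in> configs V \<Longrightarrow> z \<in> configs V \<Longrightarrow> spin_flip V x (spin_flip V x z) = z"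
  using configs_spin[of x V] configs_undefined[of z V] by (fastforce simp: spin_flip_def)

lemma spin_prod_spin_flip: "A \<subseteq> V \<Longrightarrow> spin_prod A (spin_flip V x z) = spin_prod A x * spin_prod A z"
  unfolding spin_prod_def spin_flip_def by (simp add: prod.distrib[symmetric] subset_iff cong: prod.cong)

lemma sum_configs_spin_flip:
  assumes "x \<in> configs V"
  shows "(\<Sum>y\<in>configs V. f y) = (\<Sum>z\<in>configs V. f (spin_flip V x z))"
  by (rule sum.reindex_bij_witness[of _ "spin_flip V x" "spin_flip V x"])
    (auto simp: assms spin_flip_spin_flip spin_flip_in_configs)

lemma sum_pairs_diff_mult:
  fixes a b w :: "'b \<Rightarrow> real"
  shows "(\<Sum>x\<in>C. \<Sum>y\<in>C. (a x - a y) * (b x - b y) * w x * w y)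
    = 2 * ((\<Sum>x\<in>C. w x) * (\<Sum>x\<in>C. a x * b x * w x) - (\<Sum>x\<in>C. a x * w x) * (\<Sum>x\<in>C. b x * w x))"
proof -
  define Z where "Z = (\<Sum>x\<in>C. w x)"
  define Na where "Na = (\<Sum>x\<in>C. a x * w x)"
  define Nb where "Nb = (\<Sum>x\<in>C. b x * w x)"
  define Nab where "Nab = (\<Sum>x\<in>C. a x * b x * w x)"
  have "(\<Sum>x\<in>C. \<Sum>y\<in>C. (a x - a y) * (b x - b y) * w x * w y)
    = (\<Sum>x\<in>C. \<Sum>y\<in>C. (a x * b x * w x) * w y - (a x * w x) * (b y * w y)
        - (b x * w x) * (a y * w y) + w x * (a y * b y * w y))"
    by (simp add: algebra_simps)
  also have "\<dots> = (\<Sum>x\<in>C. (a x * b x * w x) * Z - (a x * w x) * Nb - (b x * w x) * Na + w x * Nab)"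
    unfolding Z_def Na_def Nb_def Nab_def by (simp add: sum.distrib sum_subtractf sum_distrib_left)
  also have "\<dots> = Nab * Z - Na * Nb - Nb * Na + Z * Nab"
    unfolding Z_def Na_def Nb_def Nab_def by (simp add: sum.distrib sum_subtractf sum_distrib_right)
  finally show ?thesis unfolding Z_def Na_def Nb_def Nab_def by (simp add: algebra_simps)
qed

lemma griffiths_first_spin_prod:
  assumes "finite V" "finite E" "\<forall>e\<in>E. e \<subseteq> V" "\<forall>e\<in>E. K e \<ge> 0" "A \<subseteq> V" "B \<subseteq> V"
  shows "0 \<le> (\<Sum>x\<in>configs V. spin_prod A x * spin_prod B x * exp (\<Sum>e\<in>E. K e * spin_prod e x))"
  using griffiths_first[OF assms(1-4), of "\<lambda>v. (if v \<in> A then 1 else 0) + (if v \<in> B then 1 else 0)"]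
  unfolding spin_prod_as_monomial[OF assms(5,1)] spin_prod_as_monomial[OF assms(6,1)]
  by (simp add: power_add prod.distrib)

text \<open>Writing \<open>y = x z\<close> pointwise turns the pair weight into a Gibbs weight with the
  couplings \<open>\<lambda> (1 + z\<^sub>e)\<close>.\<close>
lemma sum_pairs_spin_prod_eq:
  fixes lam :: real
  assumes E: "\<forall>e\<in>E. e \<subseteq> V" and A: "A \<subseteq> V" and B: "B \<subseteq> V"
  defines "w \<equiv> \<lambda>x. exp (ising_energy E lam x)"
  shows "(\<Sum>x\<in>configs V. \<Sum>y\<in>configs V.
      (spin_prod A x - spin_prod A y) * (spin_prod B x - spin_prod B y) * w x * w y)
    = (\<Sum>z\<in>configs V. (1 - spin_prod A z) * (1 - spin_prod B z) * (\<Sum>x\<in>configs V.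
        spin_prod A x * spin_prod B x * exp (\<Sum>e\<in>E. lam * (1 + spin_prod e z) * spin_prod e x)))"
proof -
  let ?a = "spin_prod A" and ?b = "spin_prod B"
  let ?G = "\<lambda>z x. ?a x * ?b x * exp (\<Sum>e\<in>E. lam * (1 + spin_prod e z) * spin_prod e x)"
  have pair: "(?a x - ?a (spin_flip V x z)) * (?b x - ?b (spin_flip V x z)) * w x * w (spin_flip V x z)
      = (1 - ?a z) * (1 - ?b z) * ?G z x" for x z
  proof -
    have weight: "w x * w (spin_flip V x z) = exp (\<Sum>e\<in>E. lam * (1 + spin_prod e z) * spin_prod e x)"
      unfolding w_def ising_energy_spin_prod exp_add[symmetric] sum.distrib[symmetric]
      using E by (intro arg_cong[where f=exp] sum.cong) (auto simp: spin_prod_spin_flip algebra_simps)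
    have "?a (spin_flip V x z) = ?a x * ?a z" "?b (spin_flip V x z) = ?b x * ?b z"
      using A B by (simp_all add: spin_prod_spin_flip)
    then have "(?a x - ?a (spin_flip V x z)) * (?b x - ?b (spin_flip V x z)) * w x * w (spin_flip V x z)
        = (1 - ?a z) * (1 - ?b z) * (?a x * ?b x) * (w x * w (spin_flip V x z))"
      by (simp add: algebra_simps)
    then show ?thesis
      unfolding weight by (simp add: mult.assoc)
  qed
  have "(\<Sum>x\<in>configs V. \<Sum>y\<in>configs V. (?a x - ?a y) * (?b x - ?b y) * w x * w y)
      = (\<Sum>x\<in>configs V. \<Sum>z\<in>configs V. (1 - ?a z) * (1 - ?b z) * ?G z x)"
  proof (rule sum.cong[OF refl])
    fix x assume x: "x \<in> configs V"
    show "(\<Sum>y\<in>configs V. (?a x - ?a y) * (?b x - ?b y) * w x * w y)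
        = (\<Sum>z\<in>configs V. (1 - ?a z) * (1 - ?b z) * ?G z x)"
      by (subst sum_configs_spin_flip[OF x]) (rule sum.cong[OF refl pair])
  qed
  then show ?thesis
    by (subst (asm) sum.swap) (simp add: sum_distrib_left)
qed

lemma sum_pairs_spin_prod_nonneg:
  assumes V: "finite V" and E: "finite E" "\<forall>e\<in>E. e \<subseteq> V" and lam: "lam \<ge> 0"
    and A: "A \<subseteq> V" and B: "B \<subseteq> V"
  shows "0 \<le> (\<Sum>x\<in>configs V. \<Sum>y\<in>configs V.
    (spin_prod A x - spin_prod A y) * (spin_prod B x - spin_prod B y)
      * exp (ising_energy E lam x) * exp (ising_energy E lam y))"
  unfolding sum_pairs_spin_prod_eq[OF E(2) A B]
proof (rule sum_nonneg)
  fix z assume z: "z \<in> configs V"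
  have "\<forall>e\<in>E. lam * (1 + spin_prod e z) \<ge> 0"
  proof
    fix e assume "e \<in> E"
    then have "spin_prod e z \<ge> -1" using spin_prod_cases[OF z, of e] E(2) by auto
    then show "lam * (1 + spin_prod e z) \<ge> 0" using lam by simp
  qed
  then have "0 \<le> (\<Sum>x\<in>configs V. spin_prod A x * spin_prod B x
      * exp (\<Sum>e\<in>E. lam * (1 + spin_prod e z) * spin_prod e x))"
    by (rule griffiths_first_spin_prod[OF V E _ A B])
  moreover have "spin_prod A z \<le> 1" "spin_prod B z \<le> 1"
    using spin_prod_cases[OF z A] spin_prod_cases[OF z B] by auto
  ultimately show "0 \<le> (1 - spin_prod A z) * (1 - spin_prod B z) * (\<Sum>x\<in>configs V. spin_prod A x
      * spin_prod B x * exp (\<Sum>e\<in>E. lam * (1 + spin_prod e z) * spin_prod e x))"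
    by simp
qed

lemma griffiths_second:
  assumes "finite V" "finite E" "\<forall>e\<in>E. e \<subseteq> V" "lam \<ge> 0" "A \<subseteq> V" "B \<subseteq> V"
  shows "gibbs_sum V E lam (spin_prod A) * gibbs_sum V E lam (spin_prod B)
    \<le> gibbs_sum V E lam (\<lambda>_. 1) * gibbs_sum V E lam (\<lambda>x. spin_prod A x * spin_prod B x)"
  using sum_pairs_spin_prod_nonneg[OF assms] unfolding sum_pairs_diff_mult gibbs_sum_def by simp

definition correlation :: "'a set \<Rightarrow> 'a set set \<Rightarrow> real \<Rightarrow> 'a set \<Rightarrow> real" where
  "correlation V E lam A = gibbs_sum V E lam (spin_prod A) / gibbs_sum V E lam (\<lambda>_. 1)"

lemma gibbs_sum_one_pos: "finite V \<Longrightarrow> gibbs_sum V E lam (\<lambda>_. 1) > 0"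
  unfolding gibbs_sum_def using finite_configs configs_nonempty by (intro sum_pos) auto

lemma correlation_eq_expectation:
  "correlation V E lam A = (\<Sum>x\<in>configs V. ising V E lam x * spin_prod A x)"
  unfolding correlation_def gibbs_sum_def ising_def partition_fn_def
  by (simp add: sum_divide_distrib mult.commute)

lemma correlation_le_one:
  assumes "finite V" "A \<subseteq> V"
  shows "correlation V E lam A \<le> 1"
proof -
  have "gibbs_sum V E lam (spin_prod A) \<le> gibbs_sum V E lam (\<lambda>_. 1)"
    unfolding gibbs_sum_def
  proof (rule sum_mono)
    fix x assume "x \<in> configs V"
    then have "spin_prod A x \<le> 1" using spin_prod_cases[of x V A] assms(2) by auto
    then show "spin_prod A x * exp (ising_energy E lam x) \<le> 1 * exp (ising_energy E lam x)"
      by (intro mult_right_mono) auto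
  qed
  then show ?thesis unfolding correlation_def using gibbs_sum_one_pos[OF assms(1)] by simp
qed

lemma gibbs_sum_insert_edge:
  assumes "finite E" "e \<notin> E" "e \<subseteq> V"
  shows "gibbs_sum V (insert e E) lam g
    = cosh lam * gibbs_sum V E lam g + sinh lam * gibbs_sum V E lam (\<lambda>x. g x * spin_prod e x)"
proof -
  have "exp (ising_energy (insert e E) lam x) = (cosh lam + spin_prod e x * sinh lam) * exp (ising_energy E lam x)"
    if "x \<in> configs V" for x
    using assms exp_mult_sign[OF spin_prod_cases[OF that assms(3)], of lam]
    by (simp add: ising_energy_spin_prod exp_add)
  then show ?thesis
    unfolding gibbs_sum_def by (simp add: algebra_simps sum.distrib sum_distrib_left cong: sum.cong)
qed

text \<open>Adding the edge \<open>e\<close> turns each Gibbs sum \<open>S g\<close> into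
  \<open>cosh \<lambda> S g + sinh \<lambda> S (g x\<^sub>e)\<close>; Griffiths' second inequality is the cross-multiplied
  comparison of the resulting ratios.\<close>
lemma correlation_mono_insert:
  assumes V: "finite V" and E: "finite E" "\<forall>e\<in>E. e \<subseteq> V" and e: "e \<notin> E" "e \<subseteq> V"
    and lam: "lam \<ge> 0" and A: "A \<subseteq> V"
  shows "correlation V E lam A \<le> correlation V (insert e E) lam A"
proof -
  define Z where "Z = gibbs_sum V E lam (\<lambda>_. 1)"
  define Na where "Na = gibbs_sum V E lam (spin_prod A)"
  define Ne where "Ne = gibbs_sum V E lam (spin_prod e)"
  define Nae where "Nae = gibbs_sum V E lam (\<lambda>x. spin_prod A x * spin_prod e x)"
  have Z': "gibbs_sum V (insert e E) lam (\<lambda>_. 1) = cosh lam * Z + sinh lam * Ne"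
    using gibbs_sum_insert_edge[OF E(1) e, of lam "\<lambda>_. 1"] unfolding Z_def Ne_def by simp
  have Na': "gibbs_sum V (insert e E) lam (spin_prod A) = cosh lam * Na + sinh lam * Nae"
    using gibbs_sum_insert_edge[OF E(1) e, of lam "spin_prod A"] unfolding Na_def Nae_def by simp
  have "Na * Ne \<le> Z * Nae"
    using griffiths_second[OF V E lam A e(2)] unfolding Z_def Na_def Ne_def Nae_def .
  then have "sinh lam * (Na * Ne) \<le> sinh lam * (Z * Nae)"
    using lam by (intro mult_left_mono) auto
  then have "Na * (cosh lam * Z + sinh lam * Ne) \<le> (cosh lam * Na + sinh lam * Nae) * Z"
    by (simp add: algebra_simps)
  moreover have "Z > 0" "cosh lam * Z + sinh lam * Ne > 0"
    using gibbs_sum_one_pos[OF V] Z' unfolding Z_def by metis+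
  ultimately show ?thesis
    unfolding correlation_def Z' Na' by (simp add: Z_def Na_def divide_simps)
qed

lemma correlation_mono:
  assumes V: "finite V" and E: "finite E" "\<forall>e\<in>E. e \<subseteq> V" and H: "H \<subseteq> E"
    and lam: "lam \<ge> 0" and A: "A \<subseteq> V"
  shows "correlation V H lam A \<le> correlation V E lam A"
proof -
  have "correlation V H lam A \<le> correlation V (H \<union> F) lam A" if "finite F" "F \<subseteq> E" for F
    using that
  proof (induction F rule: finite_induct)
    case (insert e F)
    have "finite (H \<union> F)" using E(1) H insert finite_subset by auto
    then have "correlation V (H \<union> F) lam A \<le> correlation V (insert e (H \<union> F)) lam A"
      if "e \<notin> H"
      using correlation_mono_insert[OF V _ _ _ _ lam A, of "H \<union> F" e] that insert H E by auto
    then show ?case using insert by (cases "e \<in> H") (auto simp: insert_absorb)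
  qed simp
  from this[of "E - H"] H E(1) show ?thesis by (simp add: Un_absorb1 Un_Diff_cancel)
qed

section \<open>Correlation across parallel paths\<close>

fun path_weight :: "real \<Rightarrow> real \<Rightarrow> ('a \<Rightarrow> real) \<Rightarrow> 'a \<Rightarrow> 'a list \<Rightarrow> real" where
  "path_weight t s x a [] = 1"
| "path_weight t s x a (b # ws) = (1 + s * (x a * x b)) * path_weight t t x b ws"

definition independent_of_spins :: "'a set \<Rightarrow> (('a \<Rightarrow> real) \<Rightarrow> real) \<Rightarrow> bool" where
  "independent_of_spins I g \<longleftrightarrow> (\<forall>x y \<sigma>. y \<in> I \<longrightarrow> g (x(y := \<sigma>)) = g x)"

lemma independent_of_spins_subset:
  "J \<subseteq> I \<Longrightarrow> independent_of_spins I g \<Longrightarrow> independent_of_spins J g"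
  unfolding independent_of_spins_def by blast

lemma independent_of_spins_mult:
  "independent_of_spins I f \<Longrightarrow> independent_of_spins I g \<Longrightarrow> independent_of_spins I (\<lambda>x. f x * g x)"
  unfolding independent_of_spins_def by simp

lemma independent_of_spins_prod_list:
  "(\<And>p. p \<in> set ps \<Longrightarrow> independent_of_spins I (f p)) \<Longrightarrow> independent_of_spins I (\<lambda>x. \<Prod>p\<leftarrow>ps. f p x)"
  unfolding independent_of_spins_def by (induction ps) auto

lemma independent_of_spins_pair:
  "u \<notin> I \<Longrightarrow> v \<notin> I \<Longrightarrow> independent_of_spins I (\<lambda>x. h (x u) (x v))"
  unfolding independent_of_spins_def by auto

lemma path_weight_fun_upd:
  "c \<notin> set (a # ws) \<Longrightarrow> path_weight t s (x(c := \<sigma>)) a ws = path_weight t s x a ws"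
  by (induction ws arbitrary: a s) auto

lemma independent_of_spins_path_weight:
  "I \<inter> set (a # ws) = {} \<Longrightarrow> independent_of_spins I (\<lambda>x. path_weight t s x a ws)"
  unfolding independent_of_spins_def using path_weight_fun_upd by (metis disjoint_iff)

text \<open>Summing out the spin \<open>\<sigma>\<close> of the second vertex merges two edges into one:
  \<open>\<Sum>\<sigma>. (1 + s x\<^sub>a \<sigma>) (1 + t \<sigma> x\<^sub>c) = 2 (1 + s t x\<^sub>a x\<^sub>c)\<close>.\<close>
lemma sum_configs_path_weight:
  assumes "finite V" "distinct (a # ws)" "ws \<noteq> []" "set (a # ws) \<subseteq> V"
    and "independent_of_spins (set (butlast ws)) g"
  shows "(\<Sum>x\<in>configs V. g x * path_weight t s x a ws)
    = 2 ^ (length ws - 1) * (\<Sum>x\<in>configs (V - set (butlast ws)).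
        g x * (1 + s * t ^ (length ws - 1) * (x a * x (last ws))))"
  using assms
proof (induction ws arbitrary: a s V)
  case (Cons b r)
  show ?case
  proof (cases r)
    case (Cons c r')
    have bV: "b \<in> V" using Cons.prems by auto
    have b: "a \<noteq> b" "c \<noteq> b" "b \<notin> set r'" using Cons.prems Cons by auto
    have g_b: "g (x(b := \<sigma>)) = g x" for x \<sigma>
      using Cons.prems(5) Cons unfolding independent_of_spins_def by simp
    have "(\<Sum>x\<in>configs V. g x * path_weight t s x a (b # r))
        = (\<Sum>x\<in>configs (V - {b}). 2 * (g x * path_weight t (s * t) x a r))"
      unfolding sum_configs_remove[OF Cons.prems(1) bV] using b
      by (intro sum.cong refl) (simp add: Cons g_b path_weight_fun_upd algebra_simps)
    also have "\<dots> = 2 * (\<Sum>x\<in>configs (V - {b}). g x * path_weight t (s * t) x a r)"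
      by (simp add: sum_distrib_left)
    also have "(\<Sum>x\<in>configs (V - {b}). g x * path_weight t (s * t) x a r)
       = 2 ^ (length r - 1) * (\<Sum>x\<in>configs (V - {b} - set (butlast r)).
           g x * (1 + (s * t) * t ^ (length r - 1) * (x a * x (last r))))"
    proof (rule Cons.IH)
      show "finite (V - {b})" "distinct (a # r)" "r \<noteq> []" "set (a # r) \<subseteq> V - {b}"
        using Cons.prems b Cons by auto
      show "independent_of_spins (set (butlast r)) g"
        using Cons.prems(5) by (rule independent_of_spins_subset[rotated]) (auto simp: Cons)
    qed
    also have "V - {b} - set (butlast r) = V - set (butlast (b # r))"
      using Cons by auto
    finally show ?thesis using Cons by (simp add: algebra_simps)
  qed (simp add: algebra_simps)
qed simp

definition simple_path_in :: "'a set \<Rightarrow> 'a \<Rightarrow> 'a \<Rightarrow> 'a list \<Rightarrow> bool" where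
  "simple_path_in V u v p \<longleftrightarrow> distinct p \<and> p \<noteq> [] \<and> hd p = u \<and> last p = v \<and> set p \<subseteq> V"

lemma simple_path_in_split:
  assumes "simple_path_in V u v p" "u \<noteq> v"
  obtains m where "p = u # m @ [v]" "distinct (u # m @ [v])" "set (u # m @ [v]) \<subseteq> V"
    "internal p = set m"
proof -
  obtain r where p: "p = u # r"
    using assms unfolding simple_path_in_def by (cases p) auto
  then have "r \<noteq> []" "last r = v"
    using assms unfolding simple_path_in_def by auto
  then have "p = u # butlast r @ [v]"
    using p append_butlast_last_id by metis
  then show ?thesis
    using that assms unfolding simple_path_in_def internal_def by auto
qed

lemma simple_path_in_set:
  assumes "simple_path_in V u v p" "u \<noteq> v"
  shows "set p = insert u (insert v (internal p))" "u \<notin> internal p" "v \<notin> internal p"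
  by (rule simple_path_in_split[OF assms]; auto)+

lemma simple_path_in_hd_tl: "simple_path_in V u v p \<Longrightarrow> u # tl p = p"
  unfolding simple_path_in_def by (cases p) auto

lemma sum_configs_simple_path_weight:
  assumes "finite V" "simple_path_in V u v p" "u \<noteq> v" "independent_of_spins (internal p) g"
  shows "(\<Sum>x\<in>configs V. g x * path_weight t t x u (tl p))
    = 2 ^ (length p - 2) * (\<Sum>x\<in>configs (V - internal p). g x * (1 + t ^ (length p - 1) * (x u * x v)))"
proof -
  obtain m where p: "p = u # m @ [v]" "distinct (u # m @ [v])" "set (u # m @ [v]) \<subseteq> V"
      "internal p = set m"
    using simple_path_in_split[OF assms(2,3)] .
  then show ?thesis
    using sum_configs_path_weight[of V u "m @ [v]" g t t] assms(1,4) by simp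
qed

lemma simple_path_in_avoid_internal:
  assumes "simple_path_in V u v p" "simple_path_in V u v q" "u \<noteq> v"
    and "internal p \<inter> internal q = {}"
  shows "set q \<inter> internal p = {}"
  using simple_path_in_set[OF assms(1,3)] simple_path_in_set[OF assms(2,3)] assms(4) by auto

lemma independent_of_spins_path_weights:
  assumes "\<forall>q\<in>set ps. simple_path_in V u v q \<and> set q \<inter> I = {}"
  shows "independent_of_spins I (\<lambda>x. \<Prod>q\<leftarrow>ps. path_weight t t x u (tl q))"
proof (intro independent_of_spins_prod_list independent_of_spins_path_weight)
  fix q assume "q \<in> set ps"
  then show "I \<inter> set (u # tl q) = {}"
    using assms simple_path_in_hd_tl[of V u v q] by (auto simp: Int_commute)
qed

lemma sum_configs_parallel_path_weights:
  assumes "finite V" "u \<noteq> v" "distinct ps" "\<forall>p\<in>set ps. simple_path_in V u v p"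
    "\<forall>p\<in>set ps. \<forall>q\<in>set ps. p \<noteq> q \<longrightarrow> internal p \<inter> internal q = {}"
    "independent_of_spins (\<Union>p\<in>set ps. internal p) g"
  shows "(\<Sum>x\<in>configs V. g x * (\<Prod>p\<leftarrow>ps. path_weight t t x u (tl p)))
    = 2 ^ (\<Sum>p\<leftarrow>ps. length p - 2) * (\<Sum>x\<in>configs (V - (\<Union>p\<in>set ps. internal p)).
        g x * (\<Prod>p\<leftarrow>ps. 1 + t ^ (length p - 1) * (x u * x v)))"
  using assms
proof (induction ps arbitrary: V g)
  case (Cons p ps)
  define I where "I = internal p"
  define J where "J = (\<Union>q\<in>set ps. internal q)"
  define wp where "wp x = 1 + t ^ (length p - 1) * (x u * x v)" for x :: "'a \<Rightarrow> real"
  let ?W = "\<lambda>x. \<Prod>q\<leftarrow>ps. path_weight t t x u (tl q)"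
  have p: "simple_path_in V u v p" using Cons.prems(4) by simp
  have avoid: "set q \<inter> I = {}" if q: "q \<in> set ps" for q
  proof -
    have "p \<noteq> q" using Cons.prems(3) q by auto
    then have "internal p \<inter> internal q = {}"
      using Cons.prems(5) q by (metis list.set_intros(1,2))
    then show ?thesis
      using simple_path_in_avoid_internal[OF p _ Cons.prems(2)] Cons.prems(4) q unfolding I_def by simp
  qed
  have g_indep: "independent_of_spins I g" "independent_of_spins J g"
    using Cons.prems(6) unfolding I_def J_def
    by (rule independent_of_spins_subset[rotated]; auto)+
  have "independent_of_spins I (\<lambda>x. g x * ?W x)"
    using Cons.prems(4) avoid
    by (intro independent_of_spins_mult g_indep(1) independent_of_spins_path_weights) auto
  then have "(\<Sum>x\<in>configs V. g x * (\<Prod>q\<leftarrow>p # ps. path_weight t t x u (tl q)))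
      = 2 ^ (length p - 2) * (\<Sum>x\<in>configs (V - I). (g x * wp x) * ?W x)"
    using sum_configs_simple_path_weight[OF Cons.prems(1) p Cons.prems(2), of "\<lambda>x. g x * ?W x" t]
    unfolding I_def wp_def by (simp add: algebra_simps)
  also have "(\<Sum>x\<in>configs (V - I). (g x * wp x) * ?W x)
      = 2 ^ (\<Sum>q\<leftarrow>ps. length q - 2) * (\<Sum>x\<in>configs (V - I - J).
          g x * wp x * (\<Prod>q\<leftarrow>ps. 1 + t ^ (length q - 1) * (x u * x v)))"
    unfolding J_def
  proof (rule Cons.IH)
    show "\<forall>q\<in>set ps. simple_path_in (V - I) u v q"
      using Cons.prems(4) avoid unfolding simple_path_in_def by auto
    have "u \<notin> J" "v \<notin> J"
      using simple_path_in_set(2,3)[OF _ Cons.prems(2)] Cons.prems(4) unfolding J_def by auto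
    then have "independent_of_spins J wp"
      using independent_of_spins_pair[of u J v "\<lambda>a b. 1 + t ^ (length p - 1) * (a * b)"]
      unfolding wp_def by simp
    then show "independent_of_spins (\<Union>q\<in>set ps. internal q) (\<lambda>x. g x * wp x)"
      using g_indep(2) unfolding J_def by (intro independent_of_spins_mult)
  qed (use Cons.prems in auto)
  also have "V - I - J = V - (\<Union>q\<in>set (p # ps). internal q)"
    unfolding I_def J_def by auto
  finally show ?case
    unfolding wp_def by (simp add: power_add mult.assoc)
qed simp

fun path_edges :: "'a list \<Rightarrow> 'a set set" where
  "path_edges (a # b # ws) = insert {a, b} (path_edges (b # ws))"
| "path_edges _ = {}"

lemma finite_path_edges: "finite (path_edges p)"
  by (induction p rule: path_edges.induct) auto

lemma path_edges_elem:
  "e \<in> path_edges p \<Longrightarrow> \<exists>a b. a \<in> set p \<and> b \<in> set p \<and> e = {a, b} \<and> (distinct p \<longrightarrow> a \<noteq> b)"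
  by (induction p rule: path_edges.induct) auto

lemma path_edges_nth: "e \<in> path_edges p \<Longrightarrow> \<exists>i. Suc i < length p \<and> e = {p ! i, p ! Suc i}"
proof (induction p rule: path_edges.induct)
  case (1 a b ws)
  show ?case
  proof (cases "e = {a, b}")
    case False
    then obtain i where "Suc i < length (b # ws)" "e = {(b # ws) ! i, (b # ws) ! Suc i}"
      using 1 by auto
    then show ?thesis by (intro exI[of _ "Suc i"]) auto
  qed (intro exI[of _ 0]; auto)
qed auto

lemma path_weight_eq_prod_path_edges:
  "distinct (a # ws) \<Longrightarrow> path_weight t t x a ws = (\<Prod>e\<in>path_edges (a # ws). 1 + t * spin_prod e x)"
proof (induction ws arbitrary: a)
  case (Cons b ws)
  have "{a, b} \<notin> path_edges (b # ws)"
    using path_edges_elem[of "{a, b}" "b # ws"] Cons.prems by (auto simp: doubleton_eq_iff)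
  moreover have "a \<noteq> b" using Cons.prems by auto
  ultimately show ?case
    using Cons finite_path_edges[of "b # ws"] by (simp add: spin_prod_def)
qed simp

locale parallel_paths =
  fixes V :: "'a set" and u v :: 'a and ps :: "'a list list"
  assumes finite_V: "finite V" and endpoints: "u \<in> V" "v \<in> V" "u \<noteq> v"
    and distinct_ps: "distinct ps"
    and simple_paths: "\<forall>p\<in>set ps. simple_path_in V u v p"
    and internal_disjoint: "\<forall>p\<in>set ps. \<forall>q\<in>set ps. p \<noteq> q \<longrightarrow> internal p \<inter> internal q = {}"
    and no_direct_edge: "\<forall>p\<in>set ps. {u, v} \<notin> path_edges p"
begin

definition path_graph :: "'a set set" where
  "path_graph = (\<Union>p\<in>set ps. path_edges p)"

definition inner_vertices :: "'a set" where
  "inner_vertices = (\<Union>p\<in>set ps. internal p)"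

lemma endpoints_not_inner: "u \<notin> inner_vertices" "v \<notin> inner_vertices"
  using simple_path_in_set(2,3)[OF _ endpoints(3)] simple_paths unfolding inner_vertices_def by auto

lemma path_graph_edge_subset: "e \<in> path_graph \<Longrightarrow> e \<subseteq> V"
  using path_edges_elem simple_paths unfolding path_graph_def simple_path_in_def by blast

lemma path_edges_disjoint:
  assumes p: "p \<in> set ps" and q: "q \<in> set ps" and "p \<noteq> q"
  shows "path_edges p \<inter> path_edges q = {}"
proof (rule ccontr)
  assume "path_edges p \<inter> path_edges q \<noteq> {}"
  then obtain e where e: "e \<in> path_edges p" "e \<in> path_edges q" by auto
  obtain a b where ab: "a \<in> set p" "b \<in> set p" "e = {a, b}" "a \<noteq> b"
    using path_edges_elem[OF e(1)] simple_paths p unfolding simple_path_in_def by blast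
  have "a \<in> set q" "b \<in> set q"
    using path_edges_elem[OF e(2)] ab(3) by (auto simp: doubleton_eq_iff)
  moreover have "internal p \<inter> internal q = {}"
    using internal_disjoint p q \<open>p \<noteq> q\<close> by blast
  ultimately have "a \<in> {u, v}" "b \<in> {u, v}"
    using ab simple_path_in_set(1)[OF _ endpoints(3)] simple_paths p q by blast+
  then have "e = {u, v}" using ab by auto
  then show False using no_direct_edge e(1) p by blast
qed

lemma exp_ising_energy_path_graph:
  assumes "x \<in> configs V"
  shows "exp (ising_energy path_graph lam x)
    = cosh lam ^ card path_graph * (\<Prod>p\<leftarrow>ps. path_weight (tanh lam) (tanh lam) x u (tl p))"
proof -
  have "exp (ising_energy path_graph lam x) = (\<Prod>e\<in>path_graph. exp (lam * spin_prod e x))"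
    unfolding ising_energy_spin_prod path_graph_def by (simp add: exp_sum finite_path_edges)
  also have "\<dots> = (\<Prod>e\<in>path_graph. cosh lam * (1 + tanh lam * spin_prod e x))"
    using exp_mult_sign_tanh[OF spin_prod_cases[OF assms path_graph_edge_subset]]
    by (intro prod.cong) auto
  also have "\<dots> = cosh lam ^ card path_graph * (\<Prod>p\<in>set ps. \<Prod>e\<in>path_edges p. 1 + tanh lam * spin_prod e x)"
    unfolding prod.distrib path_graph_def
    by (simp add: prod.UNION_disjoint finite_path_edges path_edges_disjoint)
  also have "(\<Prod>p\<in>set ps. \<Prod>e\<in>path_edges p. 1 + tanh lam * spin_prod e x)
      = (\<Prod>p\<leftarrow>ps. path_weight (tanh lam) (tanh lam) x u (tl p))"
    unfolding prod.distinct_set_conv_list[OF distinct_ps]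
  proof (intro arg_cong[where f=prod_list] map_cong refl)
    fix p assume "p \<in> set ps"
    then have "simple_path_in V u v p" using simple_paths by simp
    then show "(\<Prod>e\<in>path_edges p. 1 + tanh lam * spin_prod e x) = path_weight (tanh lam) (tanh lam) x u (tl p)"
      using path_weight_eq_prod_path_edges[of u "tl p"] simple_path_in_hd_tl[of V u v p]
      unfolding simple_path_in_def by simp
  qed
  finally show ?thesis .
qed

lemma gibbs_sum_path_graph:
  assumes "independent_of_spins inner_vertices g"
    and "\<And>x. g x * (\<Prod>p\<leftarrow>ps. 1 + tanh lam ^ (length p - 1) * (x u * x v)) = h (x u * x v)"
  shows "gibbs_sum V path_graph lam g = cosh lam ^ card path_graph * 2 ^ (\<Sum>p\<leftarrow>ps. length p - 2)
    * 2 ^ (card (V - inner_vertices) - 1) * (h 1 + h (-1))"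
proof -
  have "gibbs_sum V path_graph lam g = cosh lam ^ card path_graph
      * (\<Sum>x\<in>configs V. g x * (\<Prod>p\<leftarrow>ps. path_weight (tanh lam) (tanh lam) x u (tl p)))"
    unfolding gibbs_sum_def
    by (simp add: exp_ising_energy_path_graph sum_distrib_left algebra_simps cong: sum.cong)
  also have "(\<Sum>x\<in>configs V. g x * (\<Prod>p\<leftarrow>ps. path_weight (tanh lam) (tanh lam) x u (tl p)))
      = 2 ^ (\<Sum>p\<leftarrow>ps. length p - 2) * (\<Sum>x\<in>configs (V - inner_vertices). h (x u * x v))"
    using sum_configs_parallel_path_weights[OF finite_V endpoints(3) distinct_ps simple_paths
        internal_disjoint assms(1)[unfolded inner_vertices_def]] assms(2)
    by (simp add: inner_vertices_def)
  also have "(\<Sum>x\<in>configs (V - inner_vertices). h (x u * x v))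
      = 2 ^ (card (V - inner_vertices) - 1) * (h 1 + h (-1))"
    using finite_V endpoints endpoints_not_inner by (intro sum_configs_pair) auto
  finally show ?thesis by (simp add: mult.assoc)
qed

lemma correlation_path_graph:
  "correlation V path_graph lam {u, v}
    = ((\<Prod>p\<leftarrow>ps. 1 + tanh lam ^ (length p - 1)) - (\<Prod>p\<leftarrow>ps. 1 - tanh lam ^ (length p - 1)))
      / ((\<Prod>p\<leftarrow>ps. 1 + tanh lam ^ (length p - 1)) + (\<Prod>p\<leftarrow>ps. 1 - tanh lam ^ (length p - 1)))"
proof -
  define c where "c = cosh lam ^ card path_graph * 2 ^ (\<Sum>p\<leftarrow>ps. length p - 2)
    * 2 ^ (card (V - inner_vertices) - 1)"
  let ?F = "\<lambda>s. \<Prod>p\<leftarrow>ps. 1 + tanh lam ^ (length p - 1) * s"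
  have uv: "spin_prod {u, v} x = x u * x v" for x
    using endpoints(3) by (simp add: spin_prod_def)
  have "independent_of_spins inner_vertices (spin_prod {u, v})"
    using independent_of_spins_pair[OF endpoints_not_inner, of "(*)"] unfolding uv .
  then have "gibbs_sum V path_graph lam (spin_prod {u, v}) = c * (1 * ?F 1 + (-1) * ?F (-1))"
    unfolding c_def by (rule gibbs_sum_path_graph) (simp add: uv)
  moreover have "gibbs_sum V path_graph lam (\<lambda>_. 1) = c * (?F 1 + ?F (-1))"
    unfolding c_def by (rule gibbs_sum_path_graph) (auto simp: independent_of_spins_def)
  moreover have "c \<noteq> 0"
    unfolding c_def by simp
  ultimately show ?thesis
    unfolding correlation_def by simp
qed

end

section \<open>The lower bound for \<open>(\<ell>, d)\<close> connected pairs\<close>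

definition ld_correlation_bound :: "real \<Rightarrow> nat \<Rightarrow> nat \<Rightarrow> real" where
  "ld_correlation_bound lam l d
    = ((1 + tanh lam ^ l) ^ d - (1 - tanh lam ^ l) ^ d) / ((1 + tanh lam ^ l) ^ d + (1 - tanh lam ^ l) ^ d)"

lemma prod_list_cross_le:
  fixes \<tau> :: real and f :: "'b \<Rightarrow> real"
  assumes "0 \<le> \<tau>" "\<forall>p\<in>set ps. \<tau> \<le> f p \<and> f p \<le> 1"
  shows "(1 + \<tau>) ^ length ps * (\<Prod>p\<leftarrow>ps. 1 - f p) \<le> (\<Prod>p\<leftarrow>ps. 1 + f p) * (1 - \<tau>) ^ length ps"
  using assms(2)
proof (induction ps)
  case (Cons p ps)
  have p: "\<tau> \<le> f p" "f p \<le> 1" using Cons.prems by auto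
  have "(1 + \<tau>) * (1 - f p) \<le> (1 + f p) * (1 - \<tau>)"
    using p by (simp add: algebra_simps)
  moreover have "(1 + \<tau>) ^ length ps * (\<Prod>p\<leftarrow>ps. 1 - f p) \<le> (\<Prod>p\<leftarrow>ps. 1 + f p) * (1 - \<tau>) ^ length ps"
    using Cons by simp
  moreover have "0 \<le> (1 + f p) * (1 - \<tau>)"
    using p assms(1) by simp
  moreover have "0 \<le> (1 + \<tau>) ^ length ps * (\<Prod>p\<leftarrow>ps. 1 - f p)"
    using Cons.prems assms(1) by (intro mult_nonneg_nonneg prod_list_nonneg) auto
  ultimately have "((1 + \<tau>) * (1 - f p)) * ((1 + \<tau>) ^ length ps * (\<Prod>p\<leftarrow>ps. 1 - f p))
      \<le> ((1 + f p) * (1 - \<tau>)) * ((\<Prod>p\<leftarrow>ps. 1 + f p) * (1 - \<tau>) ^ length ps)"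
    by (rule mult_mono)
  then show ?case by (simp add: algebra_simps)
qed simp

lemma diff_div_add_le:
  fixes a b c d :: real
  assumes "a * d \<le> c * b" "a + b > 0" "c + d > 0"
  shows "(a - b) / (a + b) \<le> (c - d) / (c + d)"
proof -
  have "(a - b) * (c + d) \<le> (c - d) * (a + b)"
    using assms(1) by (simp add: algebra_simps)
  then show ?thesis
    using assms(2,3) by (simp add: divide_simps)
qed

lemma ld_correlation_bound_le:
  assumes "lam > 0" "\<forall>p\<in>set ps. length p - 1 \<le> l"
  shows "ld_correlation_bound lam l (length ps)
    \<le> ((\<Prod>p\<leftarrow>ps. 1 + tanh lam ^ (length p - 1)) - (\<Prod>p\<leftarrow>ps. 1 - tanh lam ^ (length p - 1)))
      / ((\<Prod>p\<leftarrow>ps. 1 + tanh lam ^ (length p - 1)) + (\<Prod>p\<leftarrow>ps. 1 - tanh lam ^ (length p - 1)))"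
proof -
  have t: "0 < tanh lam" "tanh lam < 1"
    using assms(1) tanh_real_lt_1 by auto
  have \<tau>: "0 \<le> tanh lam ^ l" "tanh lam ^ l \<le> 1"
    using t by (auto intro: power_le_one)
  have f: "\<forall>p\<in>set ps. tanh lam ^ l \<le> tanh lam ^ (length p - 1) \<and> tanh lam ^ (length p - 1) \<le> 1"
    using assms(2) t by (auto intro: power_decreasing power_le_one)
  show ?thesis
    unfolding ld_correlation_bound_def
  proof (rule diff_div_add_le)
    show "(1 + tanh lam ^ l) ^ length ps * (\<Prod>p\<leftarrow>ps. 1 - tanh lam ^ (length p - 1))
        \<le> (\<Prod>p\<leftarrow>ps. 1 + tanh lam ^ (length p - 1)) * (1 - tanh lam ^ l) ^ length ps"
      by (rule prod_list_cross_le[OF \<tau>(1) f])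
    have "0 < (\<Prod>p\<leftarrow>ps. 1 + tanh lam ^ (length p - 1))"
      using f \<tau> by (induction ps) auto
    moreover have "0 \<le> (\<Prod>p\<leftarrow>ps. 1 - tanh lam ^ (length p - 1))"
      using f by (intro prod_list_nonneg) auto
    ultimately
    show "0 < (\<Prod>p\<leftarrow>ps. 1 + tanh lam ^ (length p - 1)) + (\<Prod>p\<leftarrow>ps. 1 - tanh lam ^ (length p - 1))"
      by simp
    show "0 < (1 + tanh lam ^ l) ^ length ps + (1 - tanh lam ^ l) ^ length ps"
      using \<tau> by (simp add: add_pos_nonneg)
  qed
qed

lemma set_subset_path_edges: "Suc 0 < length p \<Longrightarrow> set p \<subseteq> \<Union>(path_edges p)"
proof (induction p rule: path_edges.induct)
  case (1 a b ws)
  then show ?case by (cases ws) auto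
qed auto

lemma is_path_simple_path_in:
  assumes "graph V E" "is_path E u v p" "u \<noteq> v"
  shows "simple_path_in V u v p" "path_edges p \<subseteq> E"
proof -
  show edges: "path_edges p \<subseteq> E"
    using assms(2) path_edges_nth unfolding is_path_def by blast
  have "Suc 0 < length p"
    using assms(2,3) unfolding is_path_def by (cases p) (auto simp: Suc_lessI)
  then have "set p \<subseteq> V"
    using set_subset_path_edges edges assms(1) unfolding graph_def by blast
  then show "simple_path_in V u v p"
    using assms(2) unfolding is_path_def simple_path_in_def by auto
qed

lemma ld_connected_parallel_paths:
  assumes "graph V E" "u \<in> V" "v \<in> V" "u \<noteq> v" "{u, v} \<notin> E" "ld_connected E l d u v"
  obtains ps where "parallel_paths V u v ps" "length ps = d" "\<forall>p\<in>set ps. length p - 1 \<le> l"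
    "parallel_paths.path_graph ps \<subseteq> E"
proof -
  obtain ps where ps: "length ps = d" "distinct ps" "\<forall>p\<in>set ps. is_path E u v p \<and> length p - 1 \<le> l"
      "\<forall>i<d. \<forall>j<d. i \<noteq> j \<longrightarrow> internal (ps ! i) \<inter> internal (ps ! j) = {}"
    using assms(6) unfolding ld_connected_def by blast
  have edges: "\<forall>p\<in>set ps. path_edges p \<subseteq> E"
    using is_path_simple_path_in(2)[OF assms(1) _ assms(4)] ps(3) by blast
  have "\<forall>p\<in>set ps. \<forall>q\<in>set ps. p \<noteq> q \<longrightarrow> internal p \<inter> internal q = {}"
    using ps(1,4) by (metis in_set_conv_nth)
  then have paths: "parallel_paths V u v ps"
    using assms ps(2,3) edges is_path_simple_path_in(1)[OF assms(1) _ assms(4)]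
    by unfold_locales (auto simp: graph_def)
  moreover have "parallel_paths.path_graph ps \<subseteq> E"
    using edges unfolding parallel_paths.path_graph_def[OF paths] by blast
  ultimately show ?thesis
    using that ps(1,3) by blast
qed

lemma correlation_ld_connected_ge:
  assumes "graph V E" "lam > 0" "u \<in> V" "v \<in> V" "u \<noteq> v" "{u, v} \<notin> E" "ld_connected E l d u v"
  shows "ld_correlation_bound lam l d \<le> correlation V E lam {u, v}"
proof -
  obtain ps where paths: "parallel_paths V u v ps" and ps: "length ps = d" "\<forall>p\<in>set ps. length p - 1 \<le> l"
      and sub: "parallel_paths.path_graph ps \<subseteq> E"
    using ld_connected_parallel_paths[OF assms(1,3-7)] .
  interpret parallel_paths V u v ps by (rule paths)
  have "ld_correlation_bound lam l d \<le> correlation V path_graph lam {u, v}"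
    using ld_correlation_bound_le[OF assms(2) ps(2)] ps(1) correlation_path_graph by simp
  also have "\<dots> \<le> correlation V E lam {u, v}"
    using assms(1-4) sub graph_finite_edges[OF assms(1)]
    by (intro correlation_mono) (auto simp: graph_def)
  finally show ?thesis .
qed

section \<open>Divergence of Gibbs measures\<close>

lemma KL_gibbs_le:
  fixes H1 H2 :: "'b \<Rightarrow> real"
  assumes C: "finite C" "C \<noteq> {}"
    and P: "\<And>x. P x = exp (H1 x) / (\<Sum>y\<in>C. exp (H1 y))"
    and Q: "\<And>x. Q x = exp (H2 x) / (\<Sum>y\<in>C. exp (H2 y))"
  shows "(\<Sum>x\<in>C. P x * ln (P x / Q x))
    \<le> (\<Sum>x\<in>C. P x * (H1 x - H2 x)) - (\<Sum>x\<in>C. Q x * (H1 x - H2 x))"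
proof -
  define Z1 where "Z1 = (\<Sum>y\<in>C. exp (H1 y))"
  define Z2 where "Z2 = (\<Sum>y\<in>C. exp (H2 y))"
  have Z: "Z1 > 0" "Z2 > 0"
    unfolding Z1_def Z2_def using C by (auto intro: sum_pos)
  have sum_PQ: "(\<Sum>x\<in>C. P x) = 1" "(\<Sum>x\<in>C. Q x) = 1"
    unfolding P Q using Z by (simp_all add: sum_divide_distrib[symmetric] Z1_def Z2_def)
  have "ln (P x / Q x) = (H1 x - H2 x) + (ln Z2 - ln Z1)" for x
    unfolding P Q Z1_def[symmetric] Z2_def[symmetric] using Z by (simp add: ln_div ln_mult)
  then have "(\<Sum>x\<in>C. P x * ln (P x / Q x)) = (\<Sum>x\<in>C. P x * (H1 x - H2 x)) + (ln Z2 - ln Z1)"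
    by (simp add: distrib_left sum.distrib sum_distrib_right[symmetric] sum_PQ)
  moreover have "(\<Sum>x\<in>C. Q x * (H1 x - H2 x)) \<le> ln Z1 - ln Z2"
  proof -
    have "exp (\<Sum>x\<in>C. Q x * (H1 x - H2 x)) \<le> (\<Sum>x\<in>C. Q x * exp (H1 x - H2 x))"
      using convex_on_sum[OF C exp_convex sum_PQ(2), of "\<lambda>x. H1 x - H2 x"] Z
      unfolding Q Z2_def by simp
    also have "\<dots> = Z1 / Z2"
      unfolding Q Z2_def[symmetric] by (simp add: exp_diff Z1_def sum_divide_distrib[symmetric])
    finally have "(\<Sum>x\<in>C. Q x * (H1 x - H2 x)) \<le> ln (Z1 / Z2)"
      using Z by (simp add: ln_ge_iff)
    then show ?thesis
      using Z by (simp add: ln_div)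
  qed
  ultimately show ?thesis
    by linarith
qed

lemma ising_energy_diff:
  assumes "finite E" "finite E'"
  shows "ising_energy E lam x - ising_energy E' lam x
    = lam * (\<Sum>e\<in>E - E'. spin_prod e x) - lam * (\<Sum>e\<in>E' - E. spin_prod e x)"
proof -
  have "ising_energy E lam x = (\<Sum>e\<in>E \<inter> E'. lam * spin_prod e x) + (\<Sum>e\<in>E - E'. lam * spin_prod e x)"
    unfolding ising_energy_spin_prod using sum.Int_Diff[OF assms(1)] by blast
  moreover have "ising_energy E' lam x = (\<Sum>e\<in>E \<inter> E'. lam * spin_prod e x) + (\<Sum>e\<in>E' - E. lam * spin_prod e x)"
    unfolding ising_energy_spin_prod using sum.Int_Diff[OF assms(2), of _ E] by (simp add: Int_commute)
  ultimately show ?thesis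
    by (simp add: sum_distrib_left)
qed

lemma KL_ising_le:
  assumes "finite V" "finite E" "finite E'"
  shows "KL V (ising V E lam) (ising V E' lam)
    \<le> lam * (\<Sum>e\<in>E - E'. correlation V E lam e - correlation V E' lam e)
      + lam * (\<Sum>e\<in>E' - E. correlation V E' lam e - correlation V E lam e)"
proof -
  have mean: "(\<Sum>x\<in>configs V. ising V F lam x * (ising_energy E lam x - ising_energy E' lam x))
    = lam * (\<Sum>e\<in>E - E'. correlation V F lam e) - lam * (\<Sum>e\<in>E' - E. correlation V F lam e)" for F
    unfolding ising_energy_diff[OF assms(2,3)] correlation_eq_expectation
    by (simp add: right_diff_distrib sum_subtractf sum_distrib_left sum.swap[of _ "configs V"]
        mult.left_commute)
  have "KL V (ising V E lam) (ising V E' lam)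
      \<le> (\<Sum>x\<in>configs V. ising V E lam x * (ising_energy E lam x - ising_energy E' lam x))
        - (\<Sum>x\<in>configs V. ising V E' lam x * (ising_energy E lam x - ising_energy E' lam x))"
    unfolding KL_def
    by (rule KL_gibbs_le[OF finite_configs[OF assms(1)] configs_nonempty])
      (simp_all add: ising_def partition_fn_def)
  then show ?thesis
    unfolding mean by (simp add: algebra_simps sum_subtractf)
qed

lemma correlation_gap_le:
  assumes "graph V E" "graph V E'" "lam > 0" "e \<in> E - E'"
    and "\<forall>u v. e = {u, v} \<longrightarrow> ld_connected E' l d u v"
  shows "correlation V E lam e - correlation V E' lam e \<le> 1 - ld_correlation_bound lam l d"
proof -
  have V: "finite V" "e \<subseteq> V" "card e = 2"
    using assms(1,4) unfolding graph_def by auto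
  then obtain u v where e: "e = {u, v}" "u \<noteq> v"
    by (auto simp: card_2_iff)
  have "ld_correlation_bound lam l d \<le> correlation V E' lam e"
    using correlation_ld_connected_ge[OF assms(2,3)] V(2) e assms(4,5) by auto
  moreover have "correlation V E lam e \<le> 1"
    using correlation_le_one[OF V(1,2)] .
  ultimately show ?thesis by simp
qed

text \<open>If \<open>tanh \<lambda> ^ \<ell> = 1\<close> and \<open>d > 0\<close>, the right-hand side is \<open>2\<close>, because \<open>x / 0 = 0\<close>.\<close>
lemma one_minus_ld_correlation_bound:
  assumes "lam > 0"
  shows "1 - ld_correlation_bound lam l d \<le> 2 / (1 + (1 + tanh lam ^ l) ^ d / (1 - tanh lam ^ l) ^ d)"
proof -
  define A where "A = (1 + tanh lam ^ l) ^ d"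
  define B where "B = (1 - tanh lam ^ l) ^ d"
  have "0 \<le> tanh lam ^ l" "tanh lam ^ l \<le> 1"
    using assms tanh_real_lt_1[of lam] by (auto intro: power_le_one)
  then have A: "A > 0" and B: "B \<ge> 0"
    unfolding A_def B_def by auto
  have "1 - (A - B) / (A + B) \<le> 2 / (1 + A / B)"
  proof (cases "B = 0")
    case False
    then have "1 - (A - B) / (A + B) = 2 / (1 + A / B)"
      using A B by (simp add: field_simps)
    then show ?thesis by simp
  qed (use A in simp)
  then show ?thesis
    unfolding ld_correlation_bound_def A_def B_def .
qed

theorem corollary3:
  fixes V :: "'a set" and E E' :: "'a set set" and lam :: real and l d :: nat
  assumes "graph V E" and "graph V E'" and "lam > 0"
    and "\<forall>e\<in>E - E'. \<forall>u v. e = {u, v} \<longrightarrow> ld_connected E' l d u v"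
    and "\<forall>e\<in>E' - E. \<forall>u v. e = {u, v} \<longrightarrow> ld_connected E l d u v"
  shows "KL V (ising V E lam) (ising V E' lam)
     \<le> 2 * lam * real (card ((E - E') \<union> (E' - E)))
        / (1 + (1 + tanh lam ^ l) ^ d / (1 - tanh lam ^ l) ^ d)"
proof -
  define \<beta> where "\<beta> = 1 - ld_correlation_bound lam l d"
  have fin: "finite V" "finite E" "finite E'"
    using assms(1,2) graph_finite_edges unfolding graph_def by auto
  have card_sym_diff: "card ((E - E') \<union> (E' - E)) = card (E - E') + card (E' - E)"
    using fin by (intro card_Un_disjoint) auto
  have "KL V (ising V E lam) (ising V E' lam)
    \<le> lam * (\<Sum>e\<in>E - E'. correlation V E lam e - correlation V E' lam e)
      + lam * (\<Sum>e\<in>E' - E. correlation V E' lam e - correlation V E lam e)"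
    using KL_ising_le[OF fin] .
  also have "\<dots> \<le> lam * (real (card (E - E')) * \<beta>) + lam * (real (card (E' - E)) * \<beta>)"
  proof (intro add_mono mult_left_mono sum_bounded_above)
    show "correlation V E lam e - correlation V E' lam e \<le> \<beta>" if "e \<in> E - E'" for e
      using correlation_gap_le[OF assms(1-3) that] assms(4) that unfolding \<beta>_def by blast
    show "correlation V E' lam e - correlation V E lam e \<le> \<beta>" if "e \<in> E' - E" for e
      using correlation_gap_le[OF assms(2,1,3) that] assms(5) that unfolding \<beta>_def by blast
  qed (use assms(3) in auto)
  also have "\<dots> = lam * real (card ((E - E') \<union> (E' - E))) * \<beta>"
    unfolding card_sym_diff by (simp add: algebra_simps)
  also have "\<dots> \<le> lam * real (card ((E - E') \<union> (E' - E)))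
      * (2 / (1 + (1 + tanh lam ^ l) ^ d / (1 - tanh lam ^ l) ^ d))"
    unfolding \<beta>_def using assms(3)
    by (intro mult_left_mono one_minus_ld_correlation_bound) auto
  finally show ?thesis
    by (simp add: mult.commute mult.left_commute)
qed

end
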